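(* Under the time evolution $T_\infty$, the basic solitons are exactly: (1) the words $F_k=F F\cdots F$ ($k$ letters, $k\ge1$), which are solitons of speed $k$ (called fast solitons); (2) the nonempty words in the letters $F$, $B_a$, $U_a$ ($a\geq1$) which contain neither $FF$ nor $FU_a$ (for any $a$) as a pair of consecutive letters; these are solitons of speed $1$ (called slow solitons).
   Context: Box-basket-ball system (BBBS). A site state is a triple $(a,b,c)$ of nonnegative integers with $a=b-c+1$ (one box, $b$ baskets, $c$ balls; each box/basket holds at most one ball, balls placed in the box first). Write $V=(1,0,0)$, $F=(0,0,1)$, $B_a=(a+1,a,0)$, $U_a=(a,a,1)$ for $a\ge1$. A state is a sequence $(S_i)_{i\in\mathbb Z}$ of site states with $S_i=V$ for all but finitely many $i$. The time evolution $T_\infty$: first every empty basket (there are $\min(a_i,b_i)$ at site $i$) is moved from site $i$ to site $i+1$, full baskets staying; then the balls are taken one at a time from left to right, and each is moved to the nearest currently unoccupied box or basket at a site strictly to its right (each ball moves exactly once). Solitons: for a finite word $A=A_1\cdots A_n$ of site states and $p\in\mathbb Z$, "$A$ at $p$" is the state with $S_{p+j-1}=A_j$ for $1\le j\le n$ and $S_i=V$ otherwise. A word $A$ with $A_1\ne V\ne A_n$ is a soliton of speed $v\ge1$ (for a time evolution $T$) if $T$ maps $A$ at $p$ to $A$ at $p+v$ for all $p$. A soliton $A$ of speed $v$ is basic if it cannot be written as $A=A'V^jA''$ with $A',A''$ nonempty solitons and $j\ge v$. *)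

theory Defs
  imports Main
begin

text \<open>Box-basket-ball system. A site state is a triple (a,b,c) of naturals
  (a = number of empty containers, b = number of baskets, c = number of balls)
  with a = b - c + 1 (computed in the integers).\<close>

type_synonym site = "nat \<times> nat \<times> nat"
type_synonym bstate = "int \<Rightarrow> site"

definition site_state :: "site \<Rightarrow> bool" where
  "site_state s = (case s of (a, b, c) \<Rightarrow> int a = int b - int c + 1)"

definition V_site :: site where "V_site = (1, 0, 0)"
definition F_site :: site where "F_site = (0, 0, 1)"
definition B_site :: "nat \<Rightarrow> site" where "B_site a = (a + 1, a, 0)"
definition U_site :: "nat \<Rightarrow> site" where "U_site a = (a, a, 1)"

definition sa :: "site \<Rightarrow> nat" where "sa s = fst s"
definition sb :: "site \<Rightarrow> nat" where "sb s = fst (snd s)"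
definition sc :: "site \<Rightarrow> nat" where "sc s = snd (snd s)"

definition is_bstate :: "bstate \<Rightarrow> bool" where
  "is_bstate S = ((\<forall>i. site_state (S i)) \<and> finite {i. S i \<noteq> V_site})"

definition empty_baskets :: "site \<Rightarrow> nat" where
  "empty_baskets s = min (sa s) (sb s)"

text \<open>Step 1: every empty basket moves from site i to site i+1, full baskets stay.\<close>
definition baskets_after :: "bstate \<Rightarrow> int \<Rightarrow> nat" where
  "baskets_after S i = sb (S i) - empty_baskets (S i) + empty_baskets (S (i - 1))"

text \<open>Capacity (box + baskets) of site i after the basket move.\<close>
definition capacity :: "bstate \<Rightarrow> int \<Rightarrow> nat" where
  "capacity S i = 1 + baskets_after S i"

definition ball_positions :: "bstate \<Rightarrow> int list" where
  "ball_positions S =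
     concat (map (\<lambda>i. replicate (sc (S i)) i) (sorted_list_of_set {i. 0 < sc (S i)}))"

text \<open>Moving one ball currently at site s to the nearest currently unoccupied
  box or basket strictly to the right; occ i = number of balls currently at site i.\<close>
definition move_ball :: "(int \<Rightarrow> nat) \<Rightarrow> int \<Rightarrow> (int \<Rightarrow> nat) \<Rightarrow> (int \<Rightarrow> nat)" where
  "move_ball cap s occ =
     (let j = (LEAST j. s < j \<and> occ j < cap j) in occ(s := occ s - 1, j := occ j + 1))"

text \<open>Step 2: the (original) balls are moved one at a time from left to right,
  each exactly once.\<close>
definition balls_after :: "bstate \<Rightarrow> int \<Rightarrow> nat" where
  "balls_after S = fold (move_ball (capacity S)) (ball_positions S) (\<lambda>i. sc (S i))"

definition T_inf :: "bstate \<Rightarrow> bstate" where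
  "T_inf S = (\<lambda>i. (baskets_after S i + 1 - balls_after S i, baskets_after S i, balls_after S i))"

definition word_at :: "site list \<Rightarrow> int \<Rightarrow> bstate" where
  "word_at A p = (\<lambda>i. if p \<le> i \<and> i < p + int (length A) then A ! nat (i - p) else V_site)"

definition is_soliton :: "(bstate \<Rightarrow> bstate) \<Rightarrow> site list \<Rightarrow> nat \<Rightarrow> bool" where
  "is_soliton T A v =
     (A \<noteq> [] \<and> (\<forall>x\<in>set A. site_state x) \<and> hd A \<noteq> V_site \<and> last A \<noteq> V_site \<and> 1 \<le> v \<and>
      (\<forall>p. T (word_at A p) = word_at A (p + int v)))"

definition is_basic_soliton :: "(bstate \<Rightarrow> bstate) \<Rightarrow> site list \<Rightarrow> nat \<Rightarrow> bool" where
  "is_basic_soliton T A v =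
     (is_soliton T A v \<and>
      \<not> (\<exists>A' A'' j v' v''. A' \<noteq> [] \<and> A'' \<noteq> [] \<and> v \<le> j \<and>
            A = A' @ replicate j V_site @ A'' \<and> is_soliton T A' v' \<and> is_soliton T A'' v''))"

definition slow_letter :: "site \<Rightarrow> bool" where
  "slow_letter x = (x = F_site \<or> (\<exists>a\<ge>1. x = B_site a) \<or> (\<exists>a\<ge>1. x = U_site a))"

definition slow_word :: "site list \<Rightarrow> bool" where
  "slow_word A =
     (A \<noteq> [] \<and> (\<forall>x\<in>set A. slow_letter x) \<and>
      (\<forall>i. Suc i < length A \<longrightarrow>
          \<not> (A ! i = F_site \<and> (A ! Suc i = F_site \<or> (\<exists>a\<ge>1. A ! Suc i = U_site a)))))"

end

theory Submission
  imports Defs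
begin

text \<open>The basket step of T_inf is local. The ball step is a left-to-right greedy
  filling, which we solve in closed form: a site j receives min (room j, carry j) balls,
  where room j is its free capacity after the basket step and carry j counts the balls
  still travelling when the sweep reaches j. If the configuration is to be reproduced
  shifted by v, the carry equals the number of balls in the window [j - v, j), so being
  a soliton of speed v becomes a family of local conditions on the word, one per site.

  From these: at speed one
  the conditions say exactly that the word is a slow word (once V letters are excluded);
  at speed v \<ge> 2 the word starts with v letters F followed by v letters V. Finally, a run
  of at least v letters V splits a soliton into two solitons of speed v, so basic
  solitons contain no such run, which yields the two families of the theorem.\<close>

lemma Least_int_from:
  fixes s w :: int
  assumes "P w" "s \<le> w"
  shows "s \<le> (LEAST j. s \<le> j \<and> P j) \<and> P (LEAST j. s \<le> j \<and> P j)
     \<and> (\<forall>y. s \<le> y \<and> P y \<longrightarrow> (LEAST j. s \<le> j \<and> P j) \<le> y)"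
proof -
  define k where "k = (LEAST k::nat. P (s + int k))"
  have ex: "P (s + int (nat (w - s)))" using assms by simp
  have Pk: "P (s + int k)" unfolding k_def by (rule LeastI) (rule ex)
  have min: "s + int k \<le> y" if "s \<le> y" "P y" for y
  proof -
    have "P (s + int (nat (y - s)))" using that by simp
    then have "k \<le> nat (y - s)" unfolding k_def by (rule Least_le)
    then show ?thesis using that by simp
  qed
  have "(LEAST j. s \<le> j \<and> P j) = s + int k"
    by (rule Least_equality) (use Pk min in auto)
  then show ?thesis using Pk min by simp
qed

primrec fill :: "(int \<Rightarrow> nat) \<Rightarrow> int \<Rightarrow> nat \<Rightarrow> int \<Rightarrow> nat" where
  "fill f s 0 = (\<lambda>_. 0)"
| "fill f s (Suc m) = (let d = fill f s m; t = (LEAST j. s \<le> j \<and> d j < f j) in d(t := d t + 1))"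

lemma fill_support_bound:
  assumes N: "\<forall>j\<ge>N. 0 < f j"
  shows "0 < fill f s m j \<Longrightarrow> j \<le> max s N + int m"
proof (induction m arbitrary: j)
  case 0 then show ?case by simp
next
  case (Suc m)
  define d where "d = fill f s m"
  define w where "w = max s N + int m + 1"
  have Pw: "s \<le> w \<and> d w < f w"
    using N Suc.IH[of w] unfolding d_def w_def by force
  define t where "t = (LEAST j. s \<le> j \<and> d j < f j)"
  have "t \<le> w" unfolding t_def using Least_int_from[of "\<lambda>j. d j < f j" w s] Pw by blast
  have eq: "fill f s (Suc m) = d(t := d t + 1)" by (simp add: d_def t_def Let_def)
  show ?case
  proof (cases "j = t")
    case True then show ?thesis using \<open>t \<le> w\<close> w_def by simp
  next
    case False
    then have "0 < fill f s m j" using Suc.prems eq d_def by simp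
    then have "j \<le> max s N + int m" using Suc.IH by blast
    then show ?thesis by simp
  qed
qed

text \<open>Hence a site with spare room at or beyond s always exists: the least such site, used
  in the definition of fill, is well defined.\<close>

lemma fill_has_room:
  assumes N: "\<forall>j\<ge>N. 0 < f j"
  shows "\<exists>j. s \<le> j \<and> fill f s m j < f j"
proof -
  define w where "w = max s N + int m + 1"
  have "fill f s m w = 0" using fill_support_bound[OF N, of s m w] unfolding w_def by force
  then show ?thesis using N by (intro exI[of _ w]) (auto simp: w_def)
qed

lemma fill_split_first:
  assumes N: "\<forall>j\<ge>N. 0 < f j"
  shows "fill f s m = (fill f (s+1) (m - min (f s) m))(s := min (f s) m)"
proof (induction m)
  case 0 then show ?case by (auto simp: fun_eq_iff)
next
  case (Suc m)
  define d where "d = fill f s m"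
  define d' where "d' = fill f (s+1) (m - min (f s) m)"
  have dd: "d = d'(s := min (f s) m)" unfolding d_def d'_def by (rule Suc.IH)
  define t where "t = (LEAST j. s \<le> j \<and> d j < f j)"
  have eq: "fill f s (Suc m) = d(t := d t + 1)" by (simp add: d_def t_def Let_def)
  show ?case
  proof (cases "m < f s")
    case True
    have "t = s" unfolding t_def
      by (rule Least_equality) (use True dd in auto)
    then show ?thesis using True eq dd d'_def by (auto simp: fun_eq_iff)
  next
    case False
    have P: "(\<lambda>j. s \<le> j \<and> d j < f j) = (\<lambda>j. s+1 \<le> j \<and> d' j < f j)"
      using False dd by (auto simp: fun_eq_iff)
    have tt: "t = (LEAST j. s+1 \<le> j \<and> d' j < f j)" unfolding t_def P ..
    have ex: "\<exists>j. s+1 \<le> j \<and> d' j < f j" using fill_has_room[OF N] d'_def by blast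
    have "s+1 \<le> t \<and> d' t < f t" unfolding tt using ex Least_int_from[of "\<lambda>j. d' j < f j" _ "s+1"] by blast
    have e1: "Suc m - min (f s) (Suc m) = Suc (m - min (f s) m)" using False by simp
    have "fill f (s+1) (Suc m - min (f s) (Suc m)) = d'(t := d' t + 1)"
      unfolding e1 by (simp add: d'_def tt Let_def)
    then show ?thesis using eq dd False \<open>s+1 \<le> t \<and> d' t < f t\<close>
      by (auto simp: fun_eq_iff)
  qed
qed

lemma move_ball_fill:
  fixes cap c occ :: "int \<Rightarrow> nat"
  assumes cle: "\<forall>j. c j \<le> cap j" and N: "\<forall>j\<ge>N. 0 < cap j - c j"
    and occ: "\<forall>j>s. occ j = c j + fill (\<lambda>j. cap j - c j) (s+1) m j"
  shows "(\<forall>j<s. move_ball cap s occ j = occ j) \<and> move_ball cap s occ s = occ s - 1 \<and>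
         (\<forall>j>s. move_ball cap s occ j = c j + fill (\<lambda>j. cap j - c j) (s+1) (Suc m) j)"
proof -
  define f where "f = (\<lambda>j. cap j - c j)"
  define d where "d = fill f (s+1) m"
  have P: "(\<lambda>j. s < j \<and> occ j < cap j) = (\<lambda>j. s+1 \<le> j \<and> d j < f j)"
  proof (rule ext)
    fix j show "(s < j \<and> occ j < cap j) = (s+1 \<le> j \<and> d j < f j)"
      using occ cle[rule_format, of j] unfolding d_def f_def by (cases "s < j") auto
  qed
  define t where "t = (LEAST j. s+1 \<le> j \<and> d j < f j)"
  have ex: "\<exists>j. s+1 \<le> j \<and> d j < f j" using fill_has_room[of N f] N unfolding d_def f_def by blast
  have tprop: "s+1 \<le> t \<and> d t < f t" unfolding t_def using ex Least_int_from[of "\<lambda>j. d j < f j" _ "s+1"] by blast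
  have mb: "move_ball cap s occ = occ(s := occ s - 1, t := occ t + 1)"
    unfolding move_ball_def Let_def P t_def ..
  have pk: "fill f (s+1) (Suc m) = d(t := d t + 1)" by (simp add: d_def t_def Let_def)
  show ?thesis unfolding mb f_def[symmetric] pk using tprop occ unfolding d_def f_def
    by auto
qed

lemma move_balls_at_site:
  fixes cap c occ :: "int \<Rightarrow> nat"
  assumes cle: "\<forall>j. c j \<le> cap j" and N: "\<forall>j\<ge>N. 0 < cap j - c j"
  shows "\<forall>j>s. occ j = c j + fill (\<lambda>j. cap j - c j) (s+1) m j \<Longrightarrow> k \<le> occ s \<Longrightarrow>
         (\<forall>j<s. fold (move_ball cap) (replicate k s) occ j = occ j) \<and>
         fold (move_ball cap) (replicate k s) occ s = occ s - k \<and>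
         (\<forall>j>s. fold (move_ball cap) (replicate k s) occ j = c j + fill (\<lambda>j. cap j - c j) (s+1) (m + k) j)"
proof (induction k arbitrary: occ m)
  case 0 then show ?case by simp
next
  case (Suc k)
  define occ' where "occ' = move_ball cap s occ"
  have ms: "(\<forall>j<s. occ' j = occ j) \<and> occ' s = occ s - 1 \<and>
         (\<forall>j>s. occ' j = c j + fill (\<lambda>j. cap j - c j) (s+1) (Suc m) j)"
    unfolding occ'_def by (rule move_ball_fill[OF cle N Suc.prems(1)])
  have "k \<le> occ' s" using ms Suc.prems(2) by simp
  then have IH: "(\<forall>j<s. fold (move_ball cap) (replicate k s) occ' j = occ' j) \<and>
         fold (move_ball cap) (replicate k s) occ' s = occ' s - k \<and>
         (\<forall>j>s. fold (move_ball cap) (replicate k s) occ' j = c j + fill (\<lambda>j. cap j - c j) (s+1) (Suc m + k) j)"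
    using Suc.IH[of occ' "Suc m"] ms by blast
  have fe: "fold (move_ball cap) (replicate (Suc k) s) occ = fold (move_ball cap) (replicate k s) occ'"
    by (simp add: occ'_def)
  show ?case unfolding fe using IH ms Suc.prems(2) by auto
qed

text \<open>carry f c lo k: number of balls still travelling when the left-to-right sweep
  starting at lo reaches site lo + k (those not absorbed by the room f, plus the new ones).\<close>

primrec carry :: "(int \<Rightarrow> nat) \<Rightarrow> (int \<Rightarrow> nat) \<Rightarrow> int \<Rightarrow> nat \<Rightarrow> nat" where
  "carry f c lo 0 = 0"
| "carry f c lo (Suc k) = carry f c lo k - min (f (lo + int k)) (carry f c lo k) + c (lo + int k)"

lemma fold_concat_map: "fold h (concat (map g xs)) s = fold (\<lambda>x. fold h (g x)) xs s"
  by (induction xs arbitrary: s) auto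

lemma move_balls_sweep:
  fixes cap c :: "int \<Rightarrow> nat"
  assumes cle: "\<forall>j. c j \<le> cap j" and N: "\<forall>j\<ge>N. 0 < cap j - c j"
  shows "fold (\<lambda>i. fold (move_ball cap) (replicate (c i) i)) (map (\<lambda>k. lo + int k) [0..<n]) c =
    (\<lambda>j. if j < lo + int n then (if j < lo then c j else min (cap j - c j) (carry (\<lambda>j. cap j - c j) c lo (nat (j - lo))))
         else c j + fill (\<lambda>j. cap j - c j) (lo + int n) (carry (\<lambda>j. cap j - c j) c lo n) j)"
proof (induction n)
  case 0 then show ?case by (auto simp: fun_eq_iff)
next
  case (Suc n)
  define f where "f = (\<lambda>j. cap j - c j)"
  have Nf: "\<forall>j\<ge>N. 0 < f j" using N f_def by simp
  define s where "s = lo + int n"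
  define M where "M = carry f c lo n"
  define occ where "occ = fold (\<lambda>i. fold (move_ball cap) (replicate (c i) i)) (map (\<lambda>k. lo + int k) [0..<n]) c"
  have occ_eq: "occ = (\<lambda>j. if j < s then (if j < lo then c j else min (f j) (carry f c lo (nat (j - lo))))
         else c j + fill f s M j)" using Suc.IH unfolding occ_def s_def M_def f_def .
  define \<mu> where "\<mu> = min (f s) M"
  have ps: "fill f s M = (fill f (s+1) (M - \<mu>))(s := \<mu>)" unfolding \<mu>_def by (rule fill_split_first[OF Nf])
  have occ_s: "occ s = c s + \<mu>" using occ_eq ps by simp
  have occ_gt: "\<forall>j>s. occ j = c j + fill (\<lambda>j. cap j - c j) (s+1) (M - \<mu>) j"
    using occ_eq ps unfolding f_def by auto
  define r where "r = fold (move_ball cap) (replicate (c s) s) occ"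
  have R: "(\<forall>j<s. r j = occ j) \<and> r s = occ s - c s \<and>
         (\<forall>j>s. r j = c j + fill (\<lambda>j. cap j - c j) (s+1) (M - \<mu> + c s) j)"
    unfolding r_def by (rule move_balls_at_site[OF cle N occ_gt]) (simp add: occ_s)
  have fe: "fold (\<lambda>i. fold (move_ball cap) (replicate (c i) i)) (map (\<lambda>k. lo + int k) [0..<Suc n]) c = r"
    by (simp add: r_def occ_def s_def)
  have Msuc: "carry f c lo (Suc n) = M - \<mu> + c s" by (simp add: M_def \<mu>_def s_def)
  have ns: "nat (s - lo) = n" by (simp add: s_def)
  show ?case unfolding fe
  proof (rule ext)
    fix j
    show "r j = (if j < lo + int (Suc n) then (if j < lo then c j else min (cap j - c j) (carry (\<lambda>j. cap j - c j) c lo (nat (j - lo))))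
         else c j + fill (\<lambda>j. cap j - c j) (lo + int (Suc n)) (carry (\<lambda>j. cap j - c j) c lo (Suc n)) j)"
    proof -
      consider "j < s" | "j = s" | "j > s" by linarith
      then show ?thesis
      proof cases
        case 1 then show ?thesis using R occ_eq unfolding f_def s_def by auto
      next
        case 2 then show ?thesis using R occ_s ns unfolding \<mu>_def M_def f_def s_def by auto
      next
        case 3
        have "lo + int (Suc n) = s + 1" by (simp add: s_def)
        have e2: "lo + (1 + int n) = lo + int n + 1" by simp
        show ?thesis using 3 R Msuc unfolding f_def by (auto simp: s_def e2)
      qed
    qed
  qed
qed

text \<open>Room of site j after the basket step: its box if it had no ball, plus the empty baskets
  arriving from j - 1 (those of site j itself have left).\<close>

definition room :: "bstate \<Rightarrow> int \<Rightarrow> nat" where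
  "room S j = (if sc (S j) = 0 then 1 else 0) + empty_baskets (S (j - 1))"

lemma capacity_room:
  assumes "site_state (S j)"
  shows "sc (S j) \<le> capacity S j \<and> capacity S j - sc (S j) = room S j"
proof -
  obtain a b c where e: "S j = (a, b, c)" by (cases "S j") auto
  show ?thesis using assms unfolding capacity_def baskets_after_def room_def empty_baskets_def
      site_state_def sa_def sb_def sc_def e by auto
qed

lemma concat_map_filter_nil:
  "(\<forall>x. \<not> p x \<longrightarrow> g x = []) \<Longrightarrow> concat (map g (filter p xs)) = concat (map g xs)"
  by (induction xs) auto

lemma ball_positions_eq:
  assumes supp: "\<forall>j. 0 < sc (S j) \<longrightarrow> lo \<le> j \<and> j < lo + int n"
  shows "ball_positions S = concat (map (\<lambda>i. replicate (sc (S i)) i) (map (\<lambda>k. lo + int k) [0..<n]))"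
proof -
  define xs where "xs = map (\<lambda>k. lo + int k) [0..<n]"
  have sx: "sorted xs" unfolding xs_def by (auto simp: sorted_iff_nth_mono)
  have dx: "distinct xs" unfolding xs_def by (auto simp: distinct_map inj_on_def)
  have setx: "set xs = {lo..<lo + int n}" unfolding xs_def
  proof
    show "set (map (\<lambda>k. lo + int k) [0..<n]) \<subseteq> {lo..<lo + int n}" by auto
    show "{lo..<lo + int n} \<subseteq> set (map (\<lambda>k. lo + int k) [0..<n])"
    proof
      fix x assume "x \<in> {lo..<lo + int n}"
      then have h: "x = lo + int (nat (x - lo))" "nat (x - lo) \<in> {0..<n}" by auto
      have "x \<in> (\<lambda>k. lo + int k) ` {0..<n}" by (rule image_eqI[where x = "nat (x - lo)"]) (use h in auto)
      then show "x \<in> set (map (\<lambda>k. lo + int k) [0..<n])" by simp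
    qed
  qed
  have Pset: "{i. 0 < sc (S i)} = set (filter (\<lambda>i. 0 < sc (S i)) xs)"
    using supp setx by auto
  have "sorted_list_of_set {i. 0 < sc (S i)} = filter (\<lambda>i. 0 < sc (S i)) xs"
    unfolding Pset by (rule sorted_list_of_set.idem_if_sorted_distinct) (use sx dx in \<open>auto simp: sorted_wrt_filter\<close>)
  then show ?thesis unfolding ball_positions_def xs_def[symmetric]
    by (simp add: concat_map_filter_nil)
qed

lemma balls_after_closed_form:
  assumes ss: "\<forall>j. site_state (S j)"
    and out: "\<forall>j. j < lo \<or> hi \<le> j \<longrightarrow> S j = V_site"
  shows "balls_after S j = (if j < lo then 0 else min (room S j) (carry (room S) (\<lambda>i. sc (S i)) lo (nat (j - lo))))"
proof -
  define c where "c = (\<lambda>i. sc (S i))"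
  define cap where "cap = capacity S"
  have cle: "\<forall>j. c j \<le> cap j" using capacity_room ss unfolding c_def cap_def by blast
  have feq: "(\<lambda>j. cap j - c j) = room S" using capacity_room ss unfolding c_def cap_def by (auto simp: fun_eq_iff)
  have N: "\<forall>j\<ge>hi+1. 0 < cap j - c j"
  proof (intro allI impI)
    fix j assume "hi + 1 \<le> j"
    then have "S j = V_site" "S (j - 1) = V_site" using out by auto
    then have "room S j = 1" unfolding room_def by (simp add: V_site_def sc_def empty_baskets_def sa_def sb_def)
    then show "0 < cap j - c j" using feq by (metis zero_less_one)
  qed
  define n where "n = nat (max hi (j + 1) - lo)"
  have supp: "\<forall>j. 0 < sc (S j) \<longrightarrow> lo \<le> j \<and> j < lo + int n"
  proof (intro allI impI)
    fix i assume "0 < sc (S i)"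
    then have "S i \<noteq> V_site" by (auto simp: V_site_def sc_def)
    then have "\<not> (i < lo \<or> hi \<le> i)" using out by blast
    moreover have "hi - lo \<le> int n" unfolding n_def by linarith
    ultimately show "lo \<le> i \<and> i < lo + int n" by linarith
  qed
  have jn: "j < lo + int n" if "lo \<le> j" using that unfolding n_def by auto
  have "balls_after S = fold (\<lambda>i. fold (move_ball cap) (replicate (c i) i)) (map (\<lambda>k. lo + int k) [0..<n]) c"
    unfolding balls_after_def ball_positions_eq[OF supp] fold_concat_map c_def cap_def ..
  also have "\<dots> = (\<lambda>j. if j < lo + int n then (if j < lo then c j else min (cap j - c j) (carry (\<lambda>j. cap j - c j) c lo (nat (j - lo))))
         else c j + fill (\<lambda>j. cap j - c j) (lo + int n) (carry (\<lambda>j. cap j - c j) c lo n) j)"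
    by (rule move_balls_sweep[OF cle N])
  finally have "balls_after S j = (if j < lo + int n then (if j < lo then c j else min (cap j - c j) (carry (\<lambda>j. cap j - c j) c lo (nat (j - lo))))
         else c j + fill (\<lambda>j. cap j - c j) (lo + int n) (carry (\<lambda>j. cap j - c j) c lo n) j)" by simp
  moreover have "j < lo \<Longrightarrow> c j = 0" using out unfolding c_def by (simp add: V_site_def sc_def)
  ultimately show ?thesis using jn feq unfolding c_def[symmetric]
    by (cases "j < lo") (auto simp: fun_eq_iff)
qed

text \<open>Balls in the window [j - v, j): they must be travelling past j if the state is to reappear
  shifted by v.\<close>

definition window :: "bstate \<Rightarrow> nat \<Rightarrow> int \<Rightarrow> nat" where
  "window S v j = (\<Sum>i\<in>{j - int v..<j}. sc (S i))"

definition local_cond :: "bstate \<Rightarrow> nat \<Rightarrow> int \<Rightarrow> bool" where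
  "local_cond S v j = (baskets_after S j = sb (S (j - int v)) \<and> min (room S j) (window S v j) = sc (S (j - int v)))"

lemma sum_split_first:
  fixes a b :: int
  assumes "a < b"
  shows "(\<Sum>i\<in>{a..<b}. g i) = g a + (\<Sum>i\<in>{a+1..<b}. (g i :: nat))"
proof -
  have "{a..<b} = insert a {a+1..<b}" using assms by auto
  then show ?thesis by simp
qed

lemma sum_split_last:
  fixes a b :: int
  assumes "a \<le> b"
  shows "(\<Sum>i\<in>{a..<b+1}. g i) = (\<Sum>i\<in>{a..<b}. g i) + (g b :: nat)"
proof -
  have "{a..<b+1} = insert b {a..<b}" using assms by auto
  then show ?thesis by simp
qed

lemma window_step:
  assumes "1 \<le> v"
  shows "window S v (j + 1) + sc (S (j - int v)) = window S v j + sc (S j)"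
proof -
  have e: "j + 1 - int v = (j - int v) + 1" by simp
  have "window S v (j+1) = (\<Sum>i\<in>{(j - int v) + 1..<j}. sc (S i)) + sc (S j)"
    unfolding window_def e by (rule sum_split_last) (use assms in linarith)
  moreover have "window S v j = sc (S (j - int v)) + (\<Sum>i\<in>{(j - int v) + 1..<j}. sc (S i))"
    unfolding window_def by (rule sum_split_first) (use assms in linarith)
  ultimately show ?thesis by simp
qed

lemma window_zero:
  assumes "\<forall>i<j. S i = V_site"
  shows "window S v j = 0"
  unfolding window_def using assms by (auto simp: V_site_def sc_def)

lemma carry_eq_window:
  assumes out: "\<forall>j. j < lo \<longrightarrow> S j = V_site" and v: "1 \<le> v"
  shows "(\<forall>k'<k. min (room S (lo + int k')) (carry (room S) (\<lambda>i. sc (S i)) lo k') = sc (S (lo + int k' - int v)))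
     \<Longrightarrow> carry (room S) (\<lambda>i. sc (S i)) lo k = window S v (lo + int k)"
proof (induction k)
  case 0 then show ?case using window_zero[of lo S v] out by simp
next
  case (Suc k)
  have IH: "carry (room S) (\<lambda>i. sc (S i)) lo k = window S v (lo + int k)" using Suc by simp
  have h: "min (room S (lo + int k)) (carry (room S) (\<lambda>i. sc (S i)) lo k) = sc (S (lo + int k - int v))"
    using Suc.prems by simp
  have ws: "window S v (lo + int k + 1) + sc (S (lo + int k - int v)) = window S v (lo + int k) + sc (S (lo + int k))"
    by (rule window_step[OF v])
  have e: "lo + int (Suc k) = lo + int k + 1" by simp
  show ?case unfolding e using IH h ws by simp
qed

lemma agreement_by_strong_induction:
  fixes M W :: "nat \<Rightarrow> 'a"
  assumes agree: "\<And>k. \<forall>k'<k. P k' (M k') \<Longrightarrow> M k = W k"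
  shows "(\<forall>k. P k (M k)) \<longleftrightarrow> (\<forall>k. P k (W k))"
proof
  assume "\<forall>k. P k (M k)"
  then show "\<forall>k. P k (W k)" using agree by metis
next
  assume H: "\<forall>k. P k (W k)"
  show "\<forall>k. P k (M k)"
  proof
    fix k show "P k (M k)"
    proof (induction k rule: less_induct)
      case (less k)
      then have "M k = W k" using agree by blast
      then show ?case using H by simp
    qed
  qed
qed

lemma all_int_split:
  fixes lo :: int
  shows "(\<forall>j. Q j) \<longleftrightarrow> (\<forall>j<lo. Q j) \<and> (\<forall>k::nat. Q (lo + int k))"
proof -
  have "j = lo + int (nat (j - lo))" if "\<not> j < lo" for j using that by simp
  then show ?thesis by metis
qed

lemma balls_shift_iff:
  assumes ss: "\<forall>j. site_state (S j)"
    and out: "\<forall>j. j < lo \<or> hi \<le> j \<longrightarrow> S j = V_site" and v: "1 \<le> v"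
  shows "(\<forall>j. balls_after S j = sc (S (j - int v))) \<longleftrightarrow>
         (\<forall>j. min (room S j) (window S v j) = sc (S (j - int v)))"
proof -
  define M where "M = carry (room S) (\<lambda>i. sc (S i)) lo"
  define P where "P k x \<longleftrightarrow> min (room S (lo + int k)) x = sc (S (lo + int k - int v))" for k x
  have out': "\<forall>j. j < lo \<longrightarrow> S j = V_site" using out by blast
  have balls: "balls_after S j = (if j < lo then 0 else min (room S j) (M (nat (j - lo))))" for j
    using balls_after_closed_form[OF ss out] unfolding M_def by blast
  have low: "sc (S (j - int v)) = 0" "window S v j = 0" if "j < lo" for j
    using that out' v window_zero[of j S v] by (auto simp: V_site_def sc_def)
  have carry_agrees: "M k = window S v (lo + int k)" if "\<forall>k'<k. P k' (M k')" for k
    using carry_eq_window[OF out' v, of k] that unfolding M_def P_def by blast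
  have "(\<forall>j. balls_after S j = sc (S (j - int v))) \<longleftrightarrow>
        (\<forall>j<lo. balls_after S j = sc (S (j - int v))) \<and>
        (\<forall>k::nat. balls_after S (lo + int k) = sc (S (lo + int k - int v)))"
    by (rule all_int_split)
  also have "\<dots> \<longleftrightarrow> (\<forall>k. P k (M k))" using balls low unfolding P_def by simp
  also have "\<dots> \<longleftrightarrow> (\<forall>k. P k (window S v (lo + int k)))"
    by (rule agreement_by_strong_induction) (rule carry_agrees)
  also have "\<dots> \<longleftrightarrow> (\<forall>j<lo. min (room S j) (window S v j) = sc (S (j - int v))) \<and>
        (\<forall>k::nat. min (room S (lo + int k)) (window S v (lo + int k)) = sc (S (lo + int k - int v)))"
    using low unfolding P_def by simp
  also have "\<dots> \<longleftrightarrow> (\<forall>j. min (room S j) (window S v j) = sc (S (j - int v)))"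
    by (rule all_int_split[symmetric])
  finally show ?thesis .
qed

lemma T_inf_shift_iff:
  assumes ss: "\<forall>j. site_state (S j)"
    and out: "\<forall>j. j < lo \<or> hi \<le> j \<longrightarrow> S j = V_site" and v: "1 \<le> v"
  shows "T_inf S = (\<lambda>j. S (j - int v)) \<longleftrightarrow> (\<forall>j. local_cond S v j)"
proof -
  have pt: "T_inf S j = S (j - int v) \<longleftrightarrow> baskets_after S j = sb (S (j - int v)) \<and> balls_after S j = sc (S (j - int v))" for j
  proof -
    obtain a b c where e: "S (j - int v) = (a, b, c)" by (cases "S (j - int v)") auto
    have "int a = int b - int c + 1" using ss[rule_format, of "j - int v"] unfolding e site_state_def by simp
    then show ?thesis unfolding T_inf_def e sb_def sc_def by auto
  qed
  have "T_inf S = (\<lambda>j. S (j - int v)) \<longleftrightarrow> (\<forall>j. T_inf S j = S (j - int v))" by (auto simp: fun_eq_iff)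
  also have "\<dots> \<longleftrightarrow> (\<forall>j. baskets_after S j = sb (S (j - int v))) \<and> (\<forall>j. balls_after S j = sc (S (j - int v)))"
    using pt by blast
  also have "\<dots> \<longleftrightarrow> (\<forall>j. baskets_after S j = sb (S (j - int v))) \<and> (\<forall>j. min (room S j) (window S v j) = sc (S (j - int v)))"
    using balls_shift_iff[OF ss out v] by blast
  also have "\<dots> \<longleftrightarrow> (\<forall>j. local_cond S v j)" unfolding local_cond_def by blast
  finally show ?thesis .
qed

lemma site_state_V: "site_state V_site" by (simp add: site_state_def V_site_def)

lemma site_state_F: "site_state F_site" by (simp add: site_state_def F_site_def)

lemma F_neq_V: "F_site \<noteq> V_site" by (simp add: F_site_def V_site_def)

lemma site_state_word_at: "\<forall>x\<in>set A. site_state x \<Longrightarrow> site_state (word_at A p j)"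
  unfolding word_at_def using site_state_V by (auto intro!: nth_mem)

lemma word_at_shift: "word_at A p = (\<lambda>i. word_at A 0 (i + (- p)))"
  unfolding word_at_def by (auto simp: fun_eq_iff)

lemma word_at_nth: "i < length A \<Longrightarrow> word_at A 0 (int i) = A ! i"
  unfolding word_at_def by simp

lemma word_at_out: "x < 0 \<or> int (length A) \<le> x \<Longrightarrow> word_at A 0 x = V_site"
  unfolding word_at_def by auto

lemma sum_shift_int:
  fixes a b d :: int
  shows "(\<Sum>i\<in>{a..<b}. g (i + d)) = (\<Sum>i\<in>{a+d..<b+d}. (g i :: nat))"
proof -
  have im: "(\<lambda>x. x + d) ` {a..<b} = {a+d..<b+d}"
    by auto
  have "(\<Sum>i\<in>{a+d..<b+d}. g i) = (\<Sum>i\<in>(\<lambda>x. x + d) ` {a..<b}. g i)" unfolding im ..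
  also have "\<dots> = (\<Sum>i\<in>{a..<b}. g (i + d))" by (subst sum.reindex) (auto simp: inj_on_def)
  finally show ?thesis by simp
qed

lemma local_cond_shift:
  assumes v: "1 \<le> v" and eq: "\<forall>i. j - int v \<le> i \<and> i \<le> j \<longrightarrow> W2 i = W (i + d)"
  shows "local_cond W2 v j = local_cond W v (j + d)"
proof -
  have e1: "W2 j = W (j + d)" "W2 (j - 1) = W (j + d - 1)" "W2 (j - int v) = W (j + d - int v)"
    using eq v by (auto simp: algebra_simps)
  have "window W2 v j = (\<Sum>i\<in>{j - int v..<j}. sc (W (i + d)))"
    unfolding window_def by (rule sum.cong) (use eq in auto)
  also have "\<dots> = window W v (j + d)" unfolding window_def sum_shift_int[of "\<lambda>i. sc (W i)"]
    by (simp add: algebra_simps)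
  finally have "window W2 v j = window W v (j + d)" .
  then show ?thesis unfolding local_cond_def baskets_after_def room_def e1 by simp
qed

lemma local_cond_vacuum:
  assumes v: "1 \<le> v" and eq: "\<forall>i. j - int v \<le> i \<and> i \<le> j \<longrightarrow> W i = V_site"
  shows "local_cond W v j"
proof -
  have e1: "W j = V_site" "W (j - 1) = V_site" "W (j - int v) = V_site"
    using eq v by auto
  have "window W v j = 0" unfolding window_def using eq by (auto simp: V_site_def sc_def)
  then show ?thesis unfolding local_cond_def baskets_after_def room_def e1
    by (simp add: V_site_def sc_def sb_def empty_baskets_def sa_def)
qed

lemma is_soliton_local:
  "is_soliton T_inf A v \<longleftrightarrow> (A \<noteq> [] \<and> (\<forall>x\<in>set A. site_state x) \<and> hd A \<noteq> V_site \<and> last A \<noteq> V_site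
     \<and> 1 \<le> v \<and> (\<forall>j. local_cond (word_at A 0) v j))"
proof -
  have key: "(\<forall>p. T_inf (word_at A p) = word_at A (p + int v)) \<longleftrightarrow> (\<forall>j. local_cond (word_at A 0) v j)"
    if ss: "\<forall>x\<in>set A. site_state x" and v: "1 \<le> v"
  proof -
    have each: "T_inf (word_at A p) = word_at A (p + int v) \<longleftrightarrow> (\<forall>j. local_cond (word_at A 0) v j)" for p
    proof -
      define S where "S = word_at A p"
      have ssS: "\<forall>j. site_state (S j)" unfolding S_def using site_state_word_at[OF ss] by blast
      have out: "\<forall>j. j < p \<or> p + int (length A) \<le> j \<longrightarrow> S j = V_site" unfolding S_def word_at_def by auto
      have sh: "word_at A (p + int v) = (\<lambda>j. S (j - int v))" unfolding S_def word_at_def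
        by (auto simp: fun_eq_iff algebra_simps)
      have "T_inf S = (\<lambda>j. S (j - int v)) \<longleftrightarrow> (\<forall>j. local_cond S v j)" by (rule T_inf_shift_iff[OF ssS out v])
      also have "\<dots> \<longleftrightarrow> (\<forall>j. local_cond (word_at A 0) v (j + - p))"
        using local_cond_shift[OF v, of _ S "word_at A 0" "- p"] word_at_shift[of A p] unfolding S_def by auto
      also have "\<dots> \<longleftrightarrow> (\<forall>j. local_cond (word_at A 0) v j)"
        by (metis add.commute add.right_neutral add_uminus_conv_diff diff_add_cancel)
      finally show ?thesis unfolding sh S_def .
    qed
    then show ?thesis by blast
  qed
  show ?thesis unfolding is_soliton_def using key by blast
qed

abbreviation eb :: "site \<Rightarrow> nat" where "eb x \<equiv> empty_baskets x"

lemma site_baskets: "site_state x \<Longrightarrow> sb x = eb x + (sc x - 1)"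
  by (cases x) (auto simp: site_state_def sb_def sc_def empty_baskets_def sa_def)

lemma site_is_V: "site_state x \<Longrightarrow> sc x = 0 \<Longrightarrow> eb x = 0 \<Longrightarrow> x = V_site"
  by (cases x) (auto simp: site_state_def sb_def sc_def empty_baskets_def sa_def V_site_def)

lemma site_is_F: "site_state x \<Longrightarrow> sc x = 1 \<Longrightarrow> eb x = 0 \<Longrightarrow> x = F_site"
  by (cases x) (auto simp: site_state_def sb_def sc_def empty_baskets_def sa_def F_site_def)

lemma site_is_U: "site_state x \<Longrightarrow> sc x = 1 \<Longrightarrow> 1 \<le> eb x \<Longrightarrow> x = U_site (eb x)"
  by (cases x) (auto simp: site_state_def sb_def sc_def empty_baskets_def sa_def U_site_def)

lemma site_is_B: "site_state x \<Longrightarrow> sc x = 0 \<Longrightarrow> 1 \<le> eb x \<Longrightarrow> x = B_site (eb x)"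
  by (cases x) (auto simp: site_state_def sb_def sc_def empty_baskets_def sa_def B_site_def)

lemma site_counts:
  "sc V_site = 0" "eb V_site = 0" "sc F_site = 1" "eb F_site = 0"
  "sc (U_site a) = 1" "eb (U_site a) = a" "sc (B_site a) = 0" "eb (B_site a) = a"
  by (auto simp: V_site_def F_site_def U_site_def B_site_def sc_def empty_baskets_def sa_def sb_def)

lemma local_cond_unfold:
  assumes "site_state (W j)" "site_state (W (j - int v))"
  shows "local_cond W v j \<longleftrightarrow> (sc (W j) - 1 + eb (W (j - 1)) = eb (W (j - int v)) + (sc (W (j - int v)) - 1) \<and>
     min ((if sc (W j) = 0 then 1 else 0) + eb (W (j - 1))) (window W v j) = sc (W (j - int v)))"
  unfolding local_cond_def baskets_after_def room_def using site_baskets[OF assms(1)] site_baskets[OF assms(2)] by simp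

lemma int_upward_induct:
  fixes P :: "int \<Rightarrow> bool"
  assumes "\<forall>j<0. P j" "\<forall>j. P (j - 1) \<longrightarrow> P j"
  shows "P j"
proof (cases "j < 0")
  case True then show ?thesis using assms by simp
next
  case False
  have "P (int k)" for k
  proof (induction k)
    case 0 then show ?case using assms(1)[rule_format, of "-1"] assms(2)[rule_format, of 0] by simp
  next
    case (Suc k) then show ?case using assms[rule_format, of "int (Suc k)"] by simp
  qed
  then show ?thesis using False by (metis nonneg_int_cases not_less)
qed

text \<open>At speed one the window is the preceding site, and the local conditions reduce to:
  at most one ball per site, and a ball at j - 1 fits into the room of j.\<close>

lemma speed_one_local:
  assumes ss: "\<forall>j. site_state (W j)" and neg: "\<forall>j<0. W j = V_site"
  shows "(\<forall>j. local_cond W 1 j) \<longleftrightarrow> (\<forall>j. sc (W j) \<le> 1 \<and> sc (W (j-1)) \<le> (if sc (W j) = 0 then 1 else 0) + eb (W (j - 1)))"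
proof -
  have w1: "window W 1 j = sc (W (j - 1))" for j
  proof -
    have "{j - 1..<j} = {j - 1}" by auto
    then show ?thesis unfolding window_def by simp
  qed
  have L: "local_cond W 1 j \<longleftrightarrow> (sc (W j) - 1 + eb (W (j - 1)) = eb (W (j - 1)) + (sc (W (j - 1)) - 1) \<and>
     min ((if sc (W j) = 0 then 1 else 0) + eb (W (j - 1))) (sc (W (j - 1))) = sc (W (j - 1)))" for j
    using local_cond_unfold[of W j 1] ss w1 by simp
  show ?thesis
  proof
    assume H: "\<forall>j. local_cond W 1 j"
    have g: "sc (W j) - 1 = sc (W (j - 1)) - 1" for j using H L by auto
    have c1: "sc (W j) \<le> 1" for j
    proof (rule int_upward_induct[of "\<lambda>j. sc (W j) \<le> 1"])
      show "\<forall>j<0. sc (W j) \<le> 1" using neg by (simp add: site_counts)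
      show "\<forall>j. sc (W (j - 1)) \<le> 1 \<longrightarrow> sc (W j) \<le> 1" using g by (metis diff_is_0_eq)
    qed
    show "\<forall>j. sc (W j) \<le> 1 \<and> sc (W (j-1)) \<le> (if sc (W j) = 0 then 1 else 0) + eb (W (j - 1))"
      using c1 H L by (metis min.absorb_iff2)
  next
    assume H: "\<forall>j. sc (W j) \<le> 1 \<and> sc (W (j-1)) \<le> (if sc (W j) = 0 then 1 else 0) + eb (W (j - 1))"
    show "\<forall>j. local_cond W 1 j"
    proof
      fix j
      have h1: "sc (W j) \<le> 1" "sc (W (j - 1)) \<le> 1" using H by auto
      have h2: "sc (W (j-1)) \<le> (if sc (W j) = 0 then 1 else 0) + eb (W (j - 1))" using H by blast
      show "local_cond W 1 j" unfolding L using h1 min_absorb2[OF h2] by simp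
    qed
  qed
qed

text \<open>A soliton of speed v \<ge> 2 whose first letter sits at 0 begins with v letters F:
  the sites before v carry at most one ball and pass on no empty basket, and every
  such site receives a ball from the window, which already contains the ball at 0.\<close>

lemma fast_first_block:
  assumes ss: "\<forall>j. site_state (W j)" and neg: "\<forall>j<0. W j = V_site" and v2: "2 \<le> v"
    and W0: "W 0 \<noteq> V_site" and H: "\<forall>j. local_cond W v j"
    and j: "0 \<le> j" "j < int v"
  shows "W j = F_site"
proof -
  define c where "c j = sc (W j)" for j
  define e where "e j = eb (W j)" for j
  have negc: "c j = 0" "e j = 0" if "j < 0" for j using neg that by (auto simp: c_def e_def site_counts)
  have H1: "c j - 1 + e (j - 1) = e (j - int v) + (c (j - int v) - 1)" for j
    using H local_cond_unfold[of W j v] ss unfolding c_def e_def by blast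
  have H2: "min ((if c j = 0 then 1 else 0) + e (j - 1)) (window W v j) = c (j - int v)" for j
    using H local_cond_unfold[of W j v] ss unfolding c_def e_def by blast
  have early: "c j \<le> 1 \<and> e (j - 1) = 0" if "j \<le> int v - 1" for j
    using H1[of j] negc[of "j - int v"] that by simp
  have e0: "e 0 = 0" using early[of 1] v2 by simp
  have c0: "c 0 = 1"
  proof -
    have "c 0 \<le> 1" using early[of 0] v2 by simp
    moreover have "c 0 \<noteq> 0" using site_is_V[of "W 0"] ss W0 e0 unfolding c_def e_def by auto
    ultimately show ?thesis by simp
  qed
  have c_later: "c j = 1" if "1 \<le> j" "j \<le> int v - 1" for j
  proof -
    have "c 0 \<le> window W v j" unfolding window_def c_def by (rule member_le_sum) (use that in auto)
    moreover have "c (j - int v) = 0" using negc that by simp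
    ultimately have "c j \<noteq> 0" using H2[of j] c0 by (cases "c j = 0") auto
    then show ?thesis using early[of j] that by simp
  qed
  have "e (int v - 1) = 0" using H1[of "int v"] e0 c0 by simp
  then have "c j = 1 \<and> e j = 0"
    using c_later[of j] c0 early[of "j + 1"] j by (cases "j = 0"; cases "j = int v - 1") auto
  then show ?thesis using site_is_F[of "W j"] ss unfolding c_def e_def by auto
qed

text \<open>After the initial block of v letters F, the next v letters are V: the window
  of the first free site holds at least two balls, so it receives none, and the
  block can emit no further balls or empty baskets.\<close>

lemma fast_second_block:
  assumes ss: "\<forall>j. site_state (W j)" and v2: "2 \<le> v" and H: "\<forall>j. local_cond W v j"
    and F: "\<forall>j. 0 \<le> j \<and> j < int v \<longrightarrow> W j = F_site"
    and j: "int v \<le> j" "j < 2 * int v"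
  shows "W j = V_site"
proof -
  define c where "c j = sc (W j)" for j
  define e where "e j = eb (W j)" for j
  have H1: "c j - 1 + e (j - 1) = e (j - int v) + (c (j - int v) - 1)" for j
    using H local_cond_unfold[of W j v] ss unfolding c_def e_def by blast
  have H2: "min ((if c j = 0 then 1 else 0) + e (j - 1)) (window W v j) = c (j - int v)" for j
    using H local_cond_unfold[of W j v] ss unfolding c_def e_def by blast
  have blk1: "c j = 1 \<and> e j = 0" if "0 \<le> j" "j < int v" for j
    using F that unfolding c_def e_def by (simp add: site_counts)
  have two_balls: "2 \<le> window W v (int v)"
  proof -
    have "{0, 1} \<subseteq> {int v - int v..<int v}" using v2 by auto
    then have "(\<Sum>i\<in>{0,1}. sc (W i)) \<le> window W v (int v)" unfolding window_def
      by (intro sum_mono2) auto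
    moreover have "(\<Sum>i\<in>{0::int,1}. sc (W i)) = 2" using blk1[of 0] blk1[of 1] v2 unfolding c_def by simp
    ultimately show ?thesis by simp
  qed
  have cv: "c (int v) = 0"
  proof -
    have "min (if c (int v) = 0 then 1 else 0) (window W v (int v)) = 1"
      using H2[of "int v"] blk1[of 0] blk1[of "int v - 1"] v2 by simp
    then show ?thesis using two_balls by (cases "c (int v) = 0") auto
  qed
  have f1: "e (j - 1) = 0" if "int v + 1 \<le> j" "j \<le> 2 * int v - 1" for j
    using H1[of j] blk1[of "j - int v"] that by simp
  have ev: "e (int v) = 0" using f1[of "int v + 1"] v2 by simp
  have f2: "e (2 * int v - 1) = 0" using H1[of "2 * int v"] ev cv by simp
  have ej: "e j = 0" using f1[of "j + 1"] f2 j by (cases "j = 2 * int v - 1") auto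
  have cj: "c j = 0"
  proof (cases "j = int v")
    case True then show ?thesis using cv by simp
  next
    case False
    have "c (j - int v) = 1" using blk1[of "j - int v"] j False by simp
    moreover have "e (j - 1) = 0" using f1[of j] j False by simp
    ultimately have "min (if c j = 0 then 1 else 0) (window W v j) = (1::nat)" using H2[of j] by simp
    then show ?thesis by (cases "c j = 0") auto
  qed
  show ?thesis using ej cj site_is_V[of "W j"] ss unfolding c_def e_def by auto
qed

lemma word_at_append:
  "word_at (A1 @ replicate j V_site @ A2) 0 x =
   (if x < int (length A1) then word_at A1 0 x else word_at A2 0 (x - int (length A1 + j)))"
proof -
  consider "x < 0" | "0 \<le> x" "x < int (length A1)" | "int (length A1) \<le> x" "x < int (length A1 + j)"
    | "int (length A1 + j) \<le> x" by linarith
  then show ?thesis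
  proof cases
    case 1 then show ?thesis by (simp add: word_at_out)
  next
    case 2
    then obtain i where i: "x = int i" "i < length A1" by (metis nonneg_int_cases of_nat_less_iff)
    then show ?thesis by (simp add: word_at_nth nth_append)
  next
    case 3
    then obtain i where i: "x = int i" "length A1 \<le> i" "i < length A1 + j" by (metis nonneg_int_cases of_nat_le_iff of_nat_less_iff order_trans of_nat_0_le_iff)
    have "i - length A1 < j" using i by simp
    then show ?thesis using 3 i by (simp add: word_at_nth word_at_out nth_append)
  next
    case 4
    then obtain i where i: "x = int i" "length A1 + j \<le> i" by (metis nonneg_int_cases of_nat_le_iff order_trans of_nat_0_le_iff)
    show ?thesis
    proof (cases "i < length A1 + j + length A2")
      case True
      have e: "x - int (length A1 + j) = int (i - (length A1 + j))" using i by simp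
      have e2: "\<not> i - length A1 < j" "i - (length A1 + j) < length A2" using i True by auto
      have lhs: "word_at (A1 @ replicate j V_site @ A2) 0 x = A2 ! (i - (length A1 + j))"
        unfolding i(1) using True e2 i(2) by (subst word_at_nth) (auto simp: nth_append diff_diff_add)
      have rhs: "word_at A2 0 (x - int (length A1 + j)) = A2 ! (i - (length A1 + j))"
        unfolding e using e2(2) by (rule word_at_nth)
      have "\<not> x < int (length A1)" using 4 by simp
      then show ?thesis using lhs rhs by simp
    next
      case False
      then show ?thesis using i 4 by (simp add: word_at_out)
    qed
  qed
qed

text \<open>A soliton of speed v with a gap of at least v letters V splits into two solitons of
  speed v, since no local condition sees both parts.\<close>

lemma soliton_split_at_gap:
  assumes sol: "is_soliton T_inf (A1 @ replicate j V_site @ A2) v" and jv: "v \<le> j"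
    and ne: "A1 \<noteq> []" "A2 \<noteq> []" and hd2: "hd A2 \<noteq> V_site" and last1: "last A1 \<noteq> V_site"
  shows "is_soliton T_inf A1 v \<and> is_soliton T_inf A2 v"
proof -
  define A where "A = A1 @ replicate j V_site @ A2"
  have S: "A \<noteq> [] \<and> (\<forall>x\<in>set A. site_state x) \<and> hd A \<noteq> V_site \<and> last A \<noteq> V_site
     \<and> 1 \<le> v \<and> (\<forall>j. local_cond (word_at A 0) v j)" using sol is_soliton_local unfolding A_def by blast
  then have v: "1 \<le> v" by blast
  define W where "W = word_at A 0"
  define m where "m = int (length A1)"
  define d where "d = int (length A1 + j)"
  have WA: "W x = (if x < m then word_at A1 0 x else word_at A2 0 (x - d))" for x
    unfolding W_def A_def m_def d_def by (rule word_at_append)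
  have W1: "word_at A1 0 x = (if x < m then W x else V_site)" for x
    using WA word_at_out[of x A1] m_def by auto
  have Wgap: "W x = V_site" if "m \<le> x" "x < d" for x
    using WA[of x] that word_at_out[of "x - d" A2] by auto
  have W2: "word_at A2 0 y = (if y < 0 then V_site else W (y + d))" for y
    using WA[of "y + d"] word_at_out[of y A2] d_def m_def by auto
  have locW: "\<forall>x. local_cond W v x" using S W_def by blast
  have l1: "local_cond (word_at A1 0) v x" for x
  proof (cases "x < m + int v")
    case True
    have "\<forall>i. x - int v \<le> i \<and> i \<le> x \<longrightarrow> word_at A1 0 i = W (i + 0)"
      using W1 Wgap True jv d_def m_def by auto
    then show ?thesis using local_cond_shift[OF v, of x "word_at A1 0" W 0] locW by simp
  next
    case False
    have "\<forall>i. x - int v \<le> i \<and> i \<le> x \<longrightarrow> word_at A1 0 i = V_site" using W1 False by auto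
    then show ?thesis by (rule local_cond_vacuum[OF v])
  qed
  have l2: "local_cond (word_at A2 0) v y" for y
  proof (cases "0 \<le> y")
    case True
    have "\<forall>i. y - int v \<le> i \<and> i \<le> y \<longrightarrow> word_at A2 0 i = W (i + d)"
    proof (intro allI impI)
      fix i assume i: "y - int v \<le> i \<and> i \<le> y"
      show "word_at A2 0 i = W (i + d)"
      proof (cases "i < 0")
        case True
        then have "W (i + d) = V_site" using Wgap[of "i + d"] i \<open>0 \<le> y\<close> jv d_def m_def by auto
        then show ?thesis using W2 True by simp
      next
        case False then show ?thesis using W2 by simp
      qed
    qed
    then show ?thesis using local_cond_shift[OF v, of y "word_at A2 0" W d] locW by simp
  next
    case False
    have "\<forall>i. y - int v \<le> i \<and> i \<le> y \<longrightarrow> word_at A2 0 i = V_site" using W2 False by auto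
    then show ?thesis by (rule local_cond_vacuum[OF v])
  qed
  have ss: "\<forall>x\<in>set A1. site_state x" "\<forall>x\<in>set A2. site_state x" using S A_def by auto
  have "hd A1 \<noteq> V_site" using S ne A_def by simp
  moreover have "last A2 \<noteq> V_site" using S ne A_def by simp
  ultimately show ?thesis unfolding is_soliton_local using ss ne hd2 last1 v l1 l2 by blast
qed

lemma split_leading_V:
  assumes R: "R \<noteq> []" "last R \<noteq> V_site" and pre: "\<forall>k<m. k < length R \<longrightarrow> R ! k = V_site"
  shows "\<exists>j A2. R = replicate j V_site @ A2 \<and> m \<le> j \<and> A2 \<noteq> [] \<and> hd A2 \<noteq> V_site \<and> last A2 = last R"
proof -
  define P where "P = (\<lambda>x. x = V_site)"
  define j where "j = length (takeWhile P R)"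
  define A2 where "A2 = dropWhile P R"
  have tw: "takeWhile P R = replicate j V_site" unfolding j_def
    by (rule replicate_length_same[symmetric]) (auto simp: P_def dest: set_takeWhileD)
  have Req: "R = replicate j V_site @ A2" using takeWhile_dropWhile_id[of P R] tw A2_def by simp
  have ne: "A2 \<noteq> []"
  proof
    assume "A2 = []"
    then have "R = replicate j V_site" using Req by simp
    then show False using R last_in_set[of R] by auto
  qed
  have hd: "hd A2 \<noteq> V_site" using hd_dropWhile[of P R] ne A2_def P_def by simp
  have mj: "m \<le> j"
  proof (rule ccontr)
    assume "\<not> m \<le> j"
    then have "j < m" by simp
    moreover have "j < length R" using Req ne by simp
    ultimately have "R ! j = V_site" using pre by blast
    moreover have "R ! j = hd A2" using Req ne by (simp add: nth_append hd_conv_nth)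
    ultimately show False using hd by simp
  qed
  have "last A2 = last R" using Req ne by simp
  then show ?thesis using Req mj ne hd by blast
qed

lemma fast_word_soliton:
  assumes k: "1 \<le> k"
  shows "is_soliton T_inf (replicate k F_site) k"
proof -
  define W where "W = word_at (replicate k F_site) 0"
  have Wd: "W x = (if 0 \<le> x \<and> x < int k then F_site else V_site)" for x
    unfolding W_def word_at_def by auto
  have ssW: "site_state (W x)" for x using Wd site_state_F site_state_V by auto
  have c: "sc (W x) = (if 0 \<le> x \<and> x < int k then 1 else 0)" "eb (W x) = 0" for x
    using Wd by (auto simp: site_counts)
  have local_cond: "local_cond W k j" for j
  proof -
    have E1: "sc (W j) - 1 + eb (W (j - 1)) = eb (W (j - int k)) + (sc (W (j - int k)) - 1)"
      using c by simp
    have E2: "min ((if sc (W j) = 0 then 1 else 0) + eb (W (j - 1))) (window W k j) = sc (W (j - int k))"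
    proof -
      consider "j < 0" | "0 \<le> j" "j < int k" | "int k \<le> j" "j < 2 * int k" | "2 * int k \<le> j" by linarith
      then show ?thesis
      proof cases
        case 1
        have "window W k j = 0" unfolding window_def using 1 c by auto
        then show ?thesis using 1 c by simp
      next
        case 2 then show ?thesis using c by simp
      next
        case 3
        have "sc (W (j - int k)) \<le> window W k j" unfolding window_def
          by (rule member_le_sum) (use k in auto)
        then show ?thesis using 3 c by (simp add: min_def)
      next
        case 4
        have "window W k j = 0" unfolding window_def using 4 c by auto
        then show ?thesis using 4 c by simp
      qed
    qed
    show ?thesis using local_cond_unfold[of W j k] ssW E1 E2 by blast
  qed
  show ?thesis unfolding is_soliton_local using k local_cond site_state_F W_def F_neq_V by (cases k) auto
qed

lemma slow_letter_props:
  assumes "slow_letter x"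
  shows "x \<noteq> V_site \<and> sc x \<le> 1 \<and> (sc x = 1 \<and> eb x = 0 \<longrightarrow> x = F_site)"
  using assms unfolding slow_letter_def
  by (auto simp: V_site_def F_site_def B_site_def U_site_def sc_def empty_baskets_def sa_def sb_def)

lemma slow_word_soliton:
  assumes sw: "slow_word A" and ss: "\<forall>x\<in>set A. site_state x"
  shows "is_soliton T_inf A 1"
proof -
  define W where "W = word_at A 0"
  have ssW: "\<forall>j. site_state (W j)" using site_state_word_at[OF ss] W_def by blast
  have neg: "\<forall>j<0. W j = V_site" using W_def word_at_out by blast
  have letters: "\<forall>x\<in>set A. slow_letter x" and ne: "A \<noteq> []" using sw slow_word_def by auto
  have Win: "W (int i) = A ! i" if "i < length A" for i using that W_def word_at_nth by simp
  have c1: "sc (W j) \<le> 1" for j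
  proof (cases "0 \<le> j \<and> j < int (length A)")
    case True
    then obtain i where i: "j = int i" "i < length A" by (metis nonneg_int_cases of_nat_less_iff)
    then show ?thesis using Win letters slow_letter_props nth_mem by metis
  next
    case False then show ?thesis using W_def word_at_out[of j A] by (auto simp: site_counts)
  qed
  have c2: "sc (W (j-1)) \<le> (if sc (W j) = 0 then 1 else 0) + eb (W (j - 1))" for j
  proof (cases "0 \<le> j - 1 \<and> j - 1 < int (length A)")
    case True
    then obtain i where i: "j - 1 = int i" "i < length A" by (metis nonneg_int_cases of_nat_less_iff)
    have xi: "slow_letter (A ! i)" using letters i by simp
    show ?thesis
    proof (cases "sc (W (j - 1)) = 1 \<and> eb (W (j - 1)) = 0")
      case True
      then have F: "A ! i = F_site" using slow_letter_props[OF xi] Win i by auto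
      have "sc (W j) = 0"
      proof (cases "Suc i < length A")
        case True
        have wj: "W j = A ! Suc i" using Win[OF True] i by (metis add.commute diff_add_cancel of_nat_Suc)
        have "\<not> (A ! Suc i = F_site \<or> (\<exists>a\<ge>1. A ! Suc i = U_site a))"
          using sw F True unfolding slow_word_def by blast
        moreover have "slow_letter (A ! Suc i)" using letters True by simp
        ultimately have "\<exists>a\<ge>1. A ! Suc i = B_site a" unfolding slow_letter_def by blast
        then show ?thesis using wj by (auto simp: site_counts)
      next
        case False
        then have "W j = V_site" using W_def word_at_out[of j A] i by simp
        then show ?thesis by (simp add: site_counts)
      qed
      then show ?thesis using True by simp
    next
      case False
      then show ?thesis using c1[of "j - 1"] by auto
    qed
  next
    case False
    then have "W (j - 1) = V_site" using W_def word_at_out[of "j - 1" A] by auto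
    then show ?thesis by (simp add: site_counts)
  qed
  have "\<forall>j. local_cond W 1 j" using speed_one_local[OF ssW neg] c1 c2 by blast
  moreover have "hd A \<noteq> V_site" "last A \<noteq> V_site" using letters ne slow_letter_props by auto
  ultimately show ?thesis unfolding is_soliton_local using ne ss W_def by auto
qed

lemma slow_word_no_V: "slow_word A \<Longrightarrow> V_site \<notin> set A"
  using slow_letter_props unfolding slow_word_def by blast

lemma soliton_without_V_basic:
  assumes sol: "is_soliton T_inf A v" and noV: "V_site \<notin> set A"
  shows "is_basic_soliton T_inf A v"
proof -
  have "1 \<le> v" using sol unfolding is_soliton_def by blast
  then have "A \<noteq> A' @ replicate j V_site @ A''" if "v \<le> j" for A' A'' j
    using noV that by (cases j) auto
  then show ?thesis using sol unfolding is_basic_soliton_def by blast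
qed

text \<open>A basic soliton of speed v has no run of at least v letters V after a nonempty
  prefix ending in a non-V letter: such a run cuts it into two solitons of speed v.\<close>

lemma basic_soliton_no_gap:
  assumes basic: "is_basic_soliton T_inf A v" and A: "A = A1 @ R"
    and A1: "A1 \<noteq> []" "last A1 \<noteq> V_site" and R: "R \<noteq> []"
    and gap: "\<forall>k<v. k < length R \<longrightarrow> R ! k = V_site"
  shows False
proof -
  have sol: "is_soliton T_inf A v" using basic unfolding is_basic_soliton_def by blast
  have "last R = last A" using A R by simp
  moreover have "last A \<noteq> V_site" using sol unfolding is_soliton_def by blast
  ultimately obtain j A2 where R_eq: "R = replicate j V_site @ A2" and "v \<le> j" "A2 \<noteq> []" "hd A2 \<noteq> V_site"
    using split_leading_V[OF R _ gap] by auto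
  then have "is_soliton T_inf A1 v \<and> is_soliton T_inf A2 v"
    using soliton_split_at_gap[of A1 j A2 v] sol A A1 by blast
  then show False
    using basic \<open>v \<le> j\<close> \<open>A2 \<noteq> []\<close> A1(1) unfolding is_basic_soliton_def A R_eq by blast
qed

text \<open>In a basic soliton of speed one, the first V would start a gap of length one.\<close>

lemma basic_speed_one_no_V:
  assumes basic: "is_basic_soliton T_inf A 1"
  shows "V_site \<notin> set A"
proof
  assume "V_site \<in> set A"
  then have ex: "\<exists>i. i < length A \<and> A ! i = V_site" by (auto simp: in_set_conv_nth)
  define i where "i = (LEAST i. i < length A \<and> A ! i = V_site)"
  have i: "i < length A" "A ! i = V_site" using LeastI_ex[OF ex] i_def by auto
  have before_i: "A ! k \<noteq> V_site" if "k < i" for k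
    using not_less_Least[of k "\<lambda>i. i < length A \<and> A ! i = V_site"] that i i_def by auto
  have ne: "A \<noteq> [] \<and> hd A \<noteq> V_site" using basic unfolding is_basic_soliton_def is_soliton_def by blast
  then have "i \<noteq> 0" using i hd_conv_nth by metis
  then have "last (take i A) = A ! (i - 1)" using i by (subst last_conv_nth) (auto simp: min_def)
  then have "last (take i A) \<noteq> V_site" using before_i[of "i - 1"] \<open>i \<noteq> 0\<close> by simp
  then show False
    using basic_soliton_no_gap[OF basic, of "take i A" "drop i A"] \<open>i \<noteq> 0\<close> i ne by simp
qed

text \<open>A soliton of speed one without V letters is a slow word: each letter carries at most
  one ball, and a letter F must be followed by a letter without a ball.\<close>

lemma speed_one_soliton_slow_word:
  assumes sol: "is_soliton T_inf A 1" and noV: "V_site \<notin> set A"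
  shows "slow_word A"
proof -
  have ne: "A \<noteq> []" and ss: "\<forall>x\<in>set A. site_state x" and loc: "\<forall>j. local_cond (word_at A 0) 1 j"
    using sol is_soliton_local by blast+
  define W where "W = word_at A 0"
  have ssW: "\<forall>j. site_state (W j)" using site_state_word_at[OF ss] W_def by blast
  have neg: "\<forall>j<0. W j = V_site" using W_def word_at_out by blast
  have Win: "W (int i) = A ! i" if "i < length A" for i using that W_def word_at_nth by simp
  have sp: "\<forall>j. sc (W j) \<le> 1 \<and> sc (W (j-1)) \<le> (if sc (W j) = 0 then 1 else 0) + eb (W (j - 1))"
    using speed_one_local[OF ssW neg] loc W_def by blast
  have letters: "slow_letter x" if xin: "x \<in> set A" for x
  proof -
    obtain i where i: "i < length A" "A ! i = x" using xin by (auto simp: in_set_conv_nth)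
    have xs: "site_state x" using ss xin by blast
    have "sc x \<le> 1" using sp Win i by metis
    moreover have "x \<noteq> V_site" using noV xin by blast
    ultimately consider "sc x = 0" "1 \<le> eb x" | "sc x = 1" "eb x = 0" | "sc x = 1" "1 \<le> eb x"
      using site_is_V[OF xs] by fastforce
    then show ?thesis
      by cases (use site_is_B[OF xs] site_is_F[OF xs] site_is_U[OF xs] in \<open>auto simp: slow_letter_def\<close>)
  qed
  have no_pair: "\<not> (A ! i = F_site \<and> (A ! Suc i = F_site \<or> (\<exists>a\<ge>1. A ! Suc i = U_site a)))"
    if "Suc i < length A" for i
  proof
    assume h: "A ! i = F_site \<and> (A ! Suc i = F_site \<or> (\<exists>a\<ge>1. A ! Suc i = U_site a))"
    have "W (int i) = F_site" using Win[of i] that h by simp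
    moreover have "sc (W (int (Suc i))) = 1" using Win[OF that] h by (auto simp: site_counts)
    moreover have "int (Suc i) - 1 = int i" by simp
    ultimately show False using sp[rule_format, of "int (Suc i)"] by (simp add: site_counts)
  qed
  show ?thesis unfolding slow_word_def using ne letters no_pair by blast
qed

text \<open>A basic soliton of speed v \<ge> 2 is F repeated v times: it starts with v letters F
  followed by v letters V, so anything after the F-block would be cut off by a gap.\<close>

lemma basic_fast_soliton:
  assumes basic: "is_basic_soliton T_inf A v" and v2: "2 \<le> v"
  shows "A = replicate v F_site"
proof -
  have sol: "is_soliton T_inf A v" using basic unfolding is_basic_soliton_def by blast
  then have ne: "A \<noteq> []" and ss: "\<forall>x\<in>set A. site_state x" and hdA: "hd A \<noteq> V_site"
    and loc: "\<forall>j. local_cond (word_at A 0) v j"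
    using is_soliton_local by blast+
  define W where "W = word_at A 0"
  have ssW: "\<forall>j. site_state (W j)" using site_state_word_at[OF ss] W_def by blast
  have neg: "\<forall>j<0. W j = V_site" using W_def word_at_out by blast
  have Win: "W (int i) = A ! i" if "i < length A" for i using that W_def word_at_nth by simp
  have "W 0 \<noteq> V_site" using Win[of 0] ne hdA by (simp add: hd_conv_nth)
  then have first: "\<forall>j. 0 \<le> j \<and> j < int v \<longrightarrow> W j = F_site"
    using fast_first_block[OF ssW neg v2] loc W_def by blast
  then have blocks: "(\<forall>j. 0 \<le> j \<and> j < int v \<longrightarrow> W j = F_site) \<and>
                     (\<forall>j. int v \<le> j \<and> j < 2 * int v \<longrightarrow> W j = V_site)"
    using fast_second_block[OF ssW v2] loc W_def by blast
  have vn: "v \<le> length A"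
  proof (rule ccontr)
    assume "\<not> v \<le> length A"
    then have "W (int v - 1) = V_site" using W_def word_at_out[of "int v - 1" A] by simp
    then show False using blocks v2 F_neq_V by simp
  qed
  have AF: "A ! i = F_site" if "i < v" for i
    using blocks Win[of i] that vn by simp
  show ?thesis
  proof (rule ccontr)
    assume "A \<noteq> replicate v F_site"
    then have vl: "v < length A" using vn AF by (metis le_neq_implies_less nth_equalityI length_replicate nth_replicate)
    have "last (take v A) = A ! (v - 1)" using v2 vl by (subst last_conv_nth) (auto simp: min_def)
    then have "last (take v A) \<noteq> V_site" using AF[of "v - 1"] v2 F_neq_V by simp
    moreover have "drop v A ! k = V_site" if "k < v" "k < length (drop v A)" for k
    proof -
      have "W (int (v + k)) = V_site" using blocks that by simp
      then show ?thesis using Win[of "v + k"] that by simp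
    qed
    ultimately show False
      using basic_soliton_no_gap[OF basic, of "take v A" "drop v A"] v2 vl ne by simp
  qed
qed

theorem mainTheorem5:
  fixes A :: "site list" and v :: nat
  assumes "\<forall>x\<in>set A. site_state x"
  shows "is_basic_soliton T_inf A v \<longleftrightarrow>
           ((\<exists>k\<ge>1. A = replicate k F_site \<and> v = k) \<or> (slow_word A \<and> v = 1))"
proof
  assume basic: "is_basic_soliton T_inf A v"
  then have sol: "is_soliton T_inf A v" and "1 \<le> v"
    unfolding is_basic_soliton_def is_soliton_def by blast+
  show "(\<exists>k\<ge>1. A = replicate k F_site \<and> v = k) \<or> (slow_word A \<and> v = 1)"
  proof (cases "v = 1")
    case True
    then have "slow_word A"
      using speed_one_soliton_slow_word sol basic_speed_one_no_V basic by blast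
    then show ?thesis using True by blast
  next
    case False
    then show ?thesis using basic_fast_soliton[OF basic] \<open>1 \<le> v\<close> by auto
  qed
next
  assume "(\<exists>k\<ge>1. A = replicate k F_site \<and> v = k) \<or> (slow_word A \<and> v = 1)"
  then show "is_basic_soliton T_inf A v"
  proof
    assume "\<exists>k\<ge>1. A = replicate k F_site \<and> v = k"
    then show ?thesis using fast_word_soliton soliton_without_V_basic F_neq_V by auto
  next
    assume "slow_word A \<and> v = 1"
    then show ?thesis using slow_word_soliton[OF _ assms] slow_word_no_V soliton_without_V_basic by blast
  qed
qed

end
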